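(* Let $p,q\in\mathbb Z_{\ge2}$ be of different parity. Then $\zeta_2^\sharp(p,q)\in\mathbb Q[\{\zeta(j+1):j\in\mathbb N\}]$.
   Context: $\zeta_2^\sharp(s_1,s_2)=\sum_{m,n=1}^\infty n^{-s_1}(2m+n)^{-s_2}$; $\zeta$ is the Riemann zeta-function; $\mathbb N=\{1,2,\ldots\}$. *)

theory Defs
  imports "HOL-Analysis.Analysis"
begin

definition rzeta :: "nat \<Rightarrow> real" where
  "rzeta s = (\<Sum>n. 1 / (real (Suc n)) ^ s)"

definition zeta2sharp :: "nat \<Rightarrow> nat \<Rightarrow> real" where
  "zeta2sharp s1 s2 =
     infsum (\<lambda>(m, n). 1 / (real n ^ s1 * real (2 * m + n) ^ s2)) ({1..} \<times> {1..})"

inductive_set zeta_algebra :: "real set" where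
  rat: "of_rat r \<in> zeta_algebra"
| gen: "j \<ge> 1 \<Longrightarrow> rzeta (j + 1) \<in> zeta_algebra"
| add: "x \<in> zeta_algebra \<Longrightarrow> y \<in> zeta_algebra \<Longrightarrow> x + y \<in> zeta_algebra"
| mult: "x \<in> zeta_algebra \<Longrightarrow> y \<in> zeta_algebra \<Longrightarrow> x * y \<in> zeta_algebra"

end

theory Submission
  imports Defs
begin

text \<open>
  For \<open>L \<ge> 1\<close> let \<open>T(L)\<close> be the sum of \<open>n^(-p) (n + L)^(-q)\<close> over all integers
  \<open>n \<noteq> 0, -L\<close>. Repeated partial fractions write \<open>T(L)\<close> as a polynomial in \<open>1/L\<close> with
  coefficients in \<open>\<rat>[\<zeta>(2), \<zeta>(3), \<dots>]\<close> that only involves powers \<open>L^(-k)\<close> with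
  \<open>k \<ge> min p q \<ge> 2\<close>, so the sum of \<open>T(2m)\<close> over \<open>m \<ge> 1\<close> lies in the algebra. Splitting the
  same double sum according to the signs of \<open>n\<close> and \<open>n + 2m\<close> gives instead
  \<open>\<zeta>\<^sup>\<sharp>(p,q) + (-1)^p P - \<zeta>\<^sup>\<sharp>(q,p)\<close>, the last sign because \<open>p + q\<close> is odd, where
  \<open>P\<close> is the sum of \<open>n^(-p) k^(-q)\<close> over \<open>n, k \<ge> 1\<close> with \<open>n + k\<close> even. Now \<open>P\<close> is an
  odd-odd plus an even-even product of zeta values, and splitting it along the diagonal gives
  \<open>P = \<zeta>\<^sup>\<sharp>(p,q) + \<zeta>\<^sup>\<sharp>(q,p) + \<zeta>(p + q)\<close>; the two relations determine \<open>\<zeta>\<^sup>\<sharp>(p,q)\<close>.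
\<close>

lemma zeta_algebra_scale: "x \<in> zeta_algebra \<Longrightarrow> of_rat r * x \<in> zeta_algebra"
  by (rule zeta_algebra.mult[OF zeta_algebra.rat])

lemma zeta_algebra_diff: "x \<in> zeta_algebra \<Longrightarrow> y \<in> zeta_algebra \<Longrightarrow> x - y \<in> zeta_algebra"
  using zeta_algebra.add[OF _ zeta_algebra_scale[of y "-1"]] by simp

lemma zeta_algebra_divide_pow2: "x \<in> zeta_algebra \<Longrightarrow> x / 2 ^ k \<in> zeta_algebra"
  using zeta_algebra_scale[of x "1 / 2 ^ k"] by (simp add: of_rat_divide of_rat_power)

lemma zeta_algebra_rzeta: "2 \<le> s \<Longrightarrow> rzeta s \<in> zeta_algebra"
  using zeta_algebra.gen[of "s - 1"] by simp

lemma zeta_algebra_minus_one_power: "(-1) ^ k \<in> zeta_algebra"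
  using zeta_algebra.rat[of "(-1) ^ k"] by (simp add: of_rat_power)

lemma zeta_algebra_one_plus_sign_rzeta:
  assumes "2 \<le> s"
  shows "(1 + (-1) ^ s) * rzeta s \<in> zeta_algebra"
  using assms by (intro zeta_algebra.mult zeta_algebra.add zeta_algebra_minus_one_power
      zeta_algebra_rzeta zeta_algebra.rat[of 1, simplified])

lemma has_sum_diff:
  fixes f g :: "'a \<Rightarrow> 'b::topological_ab_group_add"
  assumes "(f has_sum a) A" and "(g has_sum b) A"
  shows "((\<lambda>x. f x - g x) has_sum (a - b)) A"
proof -
  have "((\<lambda>x. - g x) has_sum - b) A"
    using assms(2) by (simp add: has_sum_uminus)
  from has_sum_add[OF assms(1) this] show ?thesis by simp
qed

lemma has_sum_product_nonneg:
  fixes f g :: "'a \<Rightarrow> real"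
  assumes "(f has_sum a) A" and "(g has_sum b) B"
    and "\<And>x. x \<in> A \<Longrightarrow> 0 \<le> f x" and "\<And>y. y \<in> B \<Longrightarrow> 0 \<le> g y"
  shows "((\<lambda>(x, y). f x * g y) has_sum a * b) (A \<times> B)"
proof -
  have rows: "((\<lambda>y. f x * g y) has_sum f x * b) B" for x
    using has_sum_cmult_right[OF assms(2)] by simp
  have total: "((\<lambda>x. f x * b) has_sum a * b) A"
    using has_sum_cmult_left[OF assms(1)] by simp
  have "(\<lambda>(x, y). f x * g y) summable_on A \<times> B"
    by (rule summable_on_SigmaI[where g = "\<lambda>x. f x * b"])
       (use rows total has_sum_imp_summable assms in auto)
  then show ?thesis
    using has_sum_SigmaI[where f = "\<lambda>(x, y). f x * g y", OF _ total] rows by auto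
qed

lemma has_sum_int_shift:
  fixes f :: "int \<Rightarrow> 'b::topological_comm_monoid_add"
  shows "(f has_sum S) A \<longleftrightarrow> ((\<lambda>n. f (n + c)) has_sum S) {n. n + c \<in> A}"
  by (rule has_sum_reindex_bij_witness[where j = "\<lambda>k. k - c" and i = "\<lambda>n. n + c"]) auto

lemma inverse_powers_product_le:
  fixes x y :: real
  assumes "1 \<le> \<bar>x\<bar>" and "1 \<le> \<bar>y\<bar>" and "2 \<le> a + b"
  shows "\<bar>1 / (x ^ a * y ^ b)\<bar> \<le> 1 / x\<^sup>2 + 1 / y\<^sup>2"
proof -
  define t where "t = min \<bar>x\<bar> \<bar>y\<bar>"
  have t: "1 \<le> t" "t \<le> \<bar>x\<bar>" "t \<le> \<bar>y\<bar>"
    using assms by (auto simp: t_def)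
  have "t\<^sup>2 \<le> t ^ (a + b)"
    by (rule power_increasing) (use assms t in auto)
  also have "\<dots> = t ^ a * t ^ b"
    by (simp add: power_add)
  also have "\<dots> \<le> \<bar>x ^ a * y ^ b\<bar>"
    unfolding abs_mult power_abs by (intro mult_mono power_mono) (use t in auto)
  finally have le: "t\<^sup>2 \<le> \<bar>x ^ a * y ^ b\<bar>" .
  have "0 < t\<^sup>2"
    using t by simp
  with le have "1 / \<bar>x ^ a * y ^ b\<bar> \<le> 1 / t\<^sup>2"
    by (intro divide_left_mono mult_pos_pos) linarith+
  also have "\<dots> \<le> 1 / x\<^sup>2 + 1 / y\<^sup>2"
    by (cases "\<bar>x\<bar> \<le> \<bar>y\<bar>") (auto simp: t_def min_def)
  finally show ?thesis
    by simp
qed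

section \<open>Zeta values as unordered sums\<close>

lemma rzeta_has_sum: "2 \<le> s \<Longrightarrow> ((\<lambda>n::nat. 1 / real n ^ s) has_sum rzeta s) {1..}"
proof -
  assume s: "2 \<le> s"
  have "summable (\<lambda>n. 1 / real (Suc n) ^ s)"
    using inverse_power_summable[OF s] by (subst summable_Suc_iff) (simp add: inverse_eq_divide)
  then have "(\<lambda>n. 1 / real (Suc n) ^ s) sums rzeta s"
    unfolding rzeta_def by (rule summable_sums)
  then have "((\<lambda>n. 1 / real (Suc n) ^ s) has_sum rzeta s) UNIV"
    by (rule sums_nonneg_imp_has_sum) simp
  moreover have "Suc ` UNIV = {1..}"
    using not0_implies_Suc by (auto simp: image_iff)
  ultimately show ?thesis
    using has_sum_reindex[of Suc UNIV "\<lambda>n::nat. 1 / real n ^ s"] by (simp add: o_def)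
qed

lemma rzeta_has_sum_even:
  assumes "2 \<le> s"
  shows "((\<lambda>n::nat. 1 / real n ^ s) has_sum rzeta s / 2 ^ s) {n. 1 \<le> n \<and> even n}"
proof -
  have "((\<lambda>n::nat. 1 / 2 ^ s * (1 / real n ^ s)) has_sum rzeta s / 2 ^ s) {1..}"
    using has_sum_cmult_right[OF rzeta_has_sum[OF assms], of "1 / 2 ^ s"] by simp
  also have "?this \<longleftrightarrow> ((\<lambda>n::nat. 1 / real n ^ s) has_sum rzeta s / 2 ^ s) {n. 1 \<le> n \<and> even n}"
    by (rule has_sum_reindex_bij_witness[where j = "\<lambda>n. 2 * n" and i = "\<lambda>n. n div 2"])
      (auto simp: power_mult_distrib)
  finally show ?thesis .
qed

lemma rzeta_has_sum_odd:
  "2 \<le> s \<Longrightarrow> ((\<lambda>n::nat. 1 / real n ^ s) has_sum rzeta s - rzeta s / 2 ^ s) {n. odd n}"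
proof -
  assume s: "2 \<le> s"
  have "{1..} - {n. 1 \<le> n \<and> even n} = {n::nat. odd n}"
    by (auto simp: Suc_le_eq intro: odd_pos)
  with has_sum_Diff[OF rzeta_has_sum[OF s] rzeta_has_sum_even[OF s]] show ?thesis
    by auto
qed

lemma inverse_minus_power: "1 / (- x) ^ s = (-1) ^ s / (x :: 'a::field) ^ s"
  by (cases "even s") auto

lemma inverse_minus_power_mult: "1 / ((- x) ^ p * y) = (-1) ^ p / (x ^ p * (y :: 'a::field))"
  by (cases "even p") auto

lemma inverse_minus_powers_odd:
  "odd (p + q) \<Longrightarrow> 1 / ((- x) ^ p * (- y) ^ q) = - (1 / (x ^ p * (y :: 'a::field) ^ q))"
  by (cases "even p") auto

lemma rzeta_has_sum_int:
  assumes s: "2 \<le> s"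
  shows "((\<lambda>n::int. 1 / of_int n ^ s) has_sum (1 + (-1) ^ s) * rzeta s) {n. n \<noteq> 0}"
proof -
  have "((\<lambda>n::nat. 1 / real n ^ s) has_sum rzeta s) {1..}"
    using rzeta_has_sum[OF s] .
  also have "?this \<longleftrightarrow> ((\<lambda>n::int. 1 / of_int n ^ s) has_sum rzeta s) {n. 0 < n}"
    by (rule has_sum_reindex_bij_witness[where j = int and i = nat]) auto
  finally have pos: "((\<lambda>n::int. 1 / of_int n ^ s) has_sum rzeta s) {n. 0 < n}" .
  have "((\<lambda>n::nat. (-1) ^ s * (1 / real n ^ s)) has_sum (-1) ^ s * rzeta s) {1..}"
    using has_sum_cmult_right[OF rzeta_has_sum[OF s]] .
  also have "?this \<longleftrightarrow> ((\<lambda>n::int. 1 / of_int n ^ s) has_sum (-1) ^ s * rzeta s) {n. n < 0}"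
    by (rule has_sum_reindex_bij_witness[where j = "\<lambda>n. - int n" and i = "\<lambda>n. nat (- n)"])
      (auto simp: inverse_minus_power)
  finally have neg: "((\<lambda>n::int. 1 / of_int n ^ s) has_sum (-1) ^ s * rzeta s) {n. n < 0}" .
  have "((\<lambda>n::int. 1 / of_int n ^ s) has_sum rzeta s + (-1) ^ s * rzeta s) ({n. 0 < n} \<union> {n. n < 0})"
    by (rule has_sum_Un_disjoint[OF pos neg]) auto
  moreover have "{n::int. 0 < n} \<union> {n. n < 0} = {n. n \<noteq> 0}"
    by auto
  ultimately show ?thesis
    by (simp add: distrib_right)
qed

section \<open>Pairs of equal parity\<close>

definition pair_term :: "nat \<Rightarrow> nat \<Rightarrow> nat \<times> nat \<Rightarrow> real" where
  "pair_term p q = (\<lambda>(n, k). 1 / (real n ^ p * real k ^ q))"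

definition same_parity_pairs :: "(nat \<times> nat) set" where
  "same_parity_pairs = {(n, k). 1 \<le> n \<and> 1 \<le> k \<and> even (n + k)}"

definition parity_sum :: "nat \<Rightarrow> nat \<Rightarrow> real" where
  "parity_sum p q = infsum (pair_term p q) same_parity_pairs"

lemma pair_term_has_sum_same_parity:
  assumes "2 \<le> p" and "2 \<le> q"
  shows "(pair_term p q has_sum
           (rzeta p - rzeta p / 2 ^ p) * (rzeta q - rzeta q / 2 ^ q) + rzeta p / 2 ^ p * (rzeta q / 2 ^ q))
         same_parity_pairs"
proof -
  let ?odd = "{n::nat. odd n}" and ?even = "{n::nat. 1 \<le> n \<and> even n}"
  have "(pair_term p q has_sum (rzeta p - rzeta p / 2 ^ p) * (rzeta q - rzeta q / 2 ^ q))
      (?odd \<times> ?odd)"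
    using has_sum_product_nonneg[OF rzeta_has_sum_odd rzeta_has_sum_odd] assms
    by (simp add: pair_term_def case_prod_unfold)
  moreover have "(pair_term p q has_sum rzeta p / 2 ^ p * (rzeta q / 2 ^ q)) (?even \<times> ?even)"
    using has_sum_product_nonneg[OF rzeta_has_sum_even rzeta_has_sum_even] assms
    by (simp add: pair_term_def case_prod_unfold)
  ultimately have "(pair_term p q has_sum
           (rzeta p - rzeta p / 2 ^ p) * (rzeta q - rzeta q / 2 ^ q) + rzeta p / 2 ^ p * (rzeta q / 2 ^ q))
         (?odd \<times> ?odd \<union> ?even \<times> ?even)"
    by (rule has_sum_Un_disjoint) auto
  moreover have "?odd \<times> ?odd \<union> ?even \<times> ?even = same_parity_pairs"
    by (auto simp: same_parity_pairs_def Suc_le_eq intro: odd_pos)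
  ultimately show ?thesis
    by simp
qed

lemma parity_sum_has_sum:
  "2 \<le> p \<Longrightarrow> 2 \<le> q \<Longrightarrow> (pair_term p q has_sum parity_sum p q) same_parity_pairs"
  unfolding parity_sum_def using pair_term_has_sum_same_parity by (blast intro: has_sum_infsum has_sum_imp_summable)

lemma parity_sum_in_zeta_algebra:
  assumes "2 \<le> p" and "2 \<le> q"
  shows "parity_sum p q \<in> zeta_algebra"
proof -
  have "parity_sum p q =
      (rzeta p - rzeta p / 2 ^ p) * (rzeta q - rzeta q / 2 ^ q) + rzeta p / 2 ^ p * (rzeta q / 2 ^ q)"
    using has_sum_unique[OF parity_sum_has_sum pair_term_has_sum_same_parity] assms by blast
  also have "\<dots> \<in> zeta_algebra"
    using assms by (intro zeta_algebra.add zeta_algebra.mult zeta_algebra_diff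
        zeta_algebra_divide_pow2 zeta_algebra_rzeta)
  finally show ?thesis .
qed

lemma pair_term_has_sum_below_diagonal_iff:
  "(pair_term p q has_sum S) {(n, k) \<in> same_parity_pairs. n < k} \<longleftrightarrow>
   ((\<lambda>(m, n). 1 / (real n ^ p * real (2 * m + n) ^ q)) has_sum S) ({1..} \<times> {1..})"
proof (rule sym, rule has_sum_reindex_bij_witness[where j = "\<lambda>(m, n). (n, 2 * m + n)"
      and i = "\<lambda>(n, k). ((k - n) div 2, n)"])
  fix a assume "a \<in> {(n, k) \<in> same_parity_pairs. n < k}"
  then obtain n k where a: "a = (n, k)" "1 \<le> n" "n < k" "even (k - n)"
    by (auto simp: same_parity_pairs_def)
  then show "(\<lambda>(m, n). (n, 2 * m + n)) ((\<lambda>(n, k). ((k - n) div 2, n)) a) = a"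
    by auto
  from a have "1 \<le> (k - n) div 2"
    by presburger
  with a show "(\<lambda>(n, k). ((k - n) div 2, n)) a \<in> {1..} \<times> {1..}"
    by auto
qed (auto simp: same_parity_pairs_def pair_term_def)

lemma pair_term_has_sum_above_diagonal_iff:
  "(pair_term p q has_sum S) {(n, k) \<in> same_parity_pairs. k < n} \<longleftrightarrow>
   ((\<lambda>(m, n). 1 / (real n ^ q * real (2 * m + n) ^ p)) has_sum S) ({1..} \<times> {1..})"
proof (rule sym, rule has_sum_reindex_bij_witness[where j = "\<lambda>(m, n). (2 * m + n, n)"
      and i = "\<lambda>(n, k). ((n - k) div 2, k)"])
  fix a assume "a \<in> {(n, k) \<in> same_parity_pairs. k < n}"
  then obtain n k where a: "a = (n, k)" "1 \<le> k" "k < n" "even (n - k)"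
    by (auto simp: same_parity_pairs_def)
  then show "(\<lambda>(m, n). (2 * m + n, n)) ((\<lambda>(n, k). ((n - k) div 2, k)) a) = a"
    by auto
  from a have "1 \<le> (n - k) div 2"
    by presburger
  with a show "(\<lambda>(n, k). ((n - k) div 2, k)) a \<in> {1..} \<times> {1..}"
    by auto
qed (auto simp: same_parity_pairs_def pair_term_def mult.commute)

lemma pair_term_has_sum_diagonal:
  assumes "2 \<le> p + q"
  shows "(pair_term p q has_sum rzeta (p + q)) {(n, k) \<in> same_parity_pairs. n = k}"
proof -
  have "((\<lambda>n::nat. 1 / real n ^ (p + q)) has_sum rzeta (p + q)) {1..}"
    using rzeta_has_sum[OF assms] .
  also have "?this \<longleftrightarrow> ?thesis"
    by (rule has_sum_reindex_bij_witness[where j = "\<lambda>n. (n, n)" and i = fst])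
      (auto simp: same_parity_pairs_def pair_term_def power_add)
  finally show ?thesis .
qed

lemma zeta2sharp_has_sum:
  assumes "2 \<le> p" and "2 \<le> q"
  shows "((\<lambda>(m, n). 1 / (real n ^ p * real (2 * m + n) ^ q)) has_sum zeta2sharp p q) ({1..} \<times> {1..})"
proof -
  have "pair_term p q summable_on {(n, k) \<in> same_parity_pairs. n < k}"
    by (rule summable_on_subset[OF has_sum_imp_summable[OF parity_sum_has_sum[OF assms]]]) auto
  then have "(\<lambda>(m, n). 1 / (real n ^ p * real (2 * m + n) ^ q)) summable_on {1..} \<times> {1..}"
    unfolding summable_on_def pair_term_has_sum_below_diagonal_iff .
  then show ?thesis
    unfolding zeta2sharp_def by (rule has_sum_infsum)
qed

lemma parity_sum_eq_zeta2sharp: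
  assumes "2 \<le> p" and "2 \<le> q"
  shows "parity_sum p q = zeta2sharp p q + zeta2sharp q p + rzeta (p + q)"
proof -
  have "(pair_term p q has_sum zeta2sharp p q + zeta2sharp q p + rzeta (p + q))
      ({(n, k) \<in> same_parity_pairs. n < k} \<union>
       {(n, k) \<in> same_parity_pairs. k < n} \<union> {(n, k) \<in> same_parity_pairs. n = k})"
  proof (intro has_sum_Un_disjoint)
    show "(pair_term p q has_sum zeta2sharp p q) {(n, k) \<in> same_parity_pairs. n < k}"
      using zeta2sharp_has_sum[OF assms] by (simp only: pair_term_has_sum_below_diagonal_iff)
    show "(pair_term p q has_sum zeta2sharp q p) {(n, k) \<in> same_parity_pairs. k < n}"
      using zeta2sharp_has_sum[OF assms(2,1)] by (simp only: pair_term_has_sum_above_diagonal_iff)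
    show "(pair_term p q has_sum rzeta (p + q)) {(n, k) \<in> same_parity_pairs. n = k}"
      using assms by (intro pair_term_has_sum_diagonal) simp
  qed auto
  moreover have "{(n, k) \<in> same_parity_pairs. n < k} \<union> {(n, k) \<in> same_parity_pairs. k < n} \<union>
      {(n, k) \<in> same_parity_pairs. n = k} = same_parity_pairs"
    by auto
  ultimately show ?thesis
    using has_sum_unique[OF parity_sum_has_sum[OF assms]] by simp
qed

section \<open>Two-sided shifted sums\<close>

definition shift_support :: "nat \<Rightarrow> int set" where
  "shift_support L = {n. n \<noteq> 0 \<and> n \<noteq> - int L}"

definition shift_term :: "nat \<Rightarrow> nat \<Rightarrow> nat \<Rightarrow> int \<Rightarrow> real" where
  "shift_term L a b n = 1 / (of_int n ^ a * of_int (n + int L) ^ b)"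

definition shift_sum :: "nat \<Rightarrow> nat \<Rightarrow> nat \<Rightarrow> real" where
  "shift_sum L a b = infsum (shift_term L a b) (shift_support L)"

lemma shift_term_summable:
  assumes "2 \<le> a + b"
  shows "shift_term L a b summable_on shift_support L"
proof -
  have zeta2: "((\<lambda>n::int. 1 / real_of_int n ^ 2) has_sum 2 * rzeta 2) {n. n \<noteq> 0}"
    using rzeta_has_sum_int[of 2] by simp
  then have zeta2_shifted:
    "((\<lambda>n::int. 1 / real_of_int (n + int L) ^ 2) has_sum 2 * rzeta 2) {n. n + int L \<in> {n. n \<noteq> 0}}"
    by (rule has_sum_int_shift[THEN iffD1])
  have "(\<lambda>n::int. 1 / real_of_int n ^ 2 + 1 / real_of_int (n + int L) ^ 2) summable_on shift_support L"
    by (intro summable_on_add summable_on_subset[OF has_sum_imp_summable[OF zeta2]]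
        summable_on_subset[OF has_sum_imp_summable[OF zeta2_shifted]]) (auto simp: shift_support_def)
  then have "(\<lambda>n. norm (shift_term L a b n)) summable_on shift_support L"
  proof (rule summable_on_comparison_test)
    fix n assume "n \<in> shift_support L"
    then have "1 \<le> \<bar>n\<bar>" "1 \<le> \<bar>n + int L\<bar>"
      unfolding shift_support_def by auto
    then have "1 \<le> \<bar>real_of_int n\<bar>" "1 \<le> \<bar>real_of_int (n + int L)\<bar>"
      by (simp_all only: of_int_abs[symmetric] of_int_1_le_iff)
    then show "norm (shift_term L a b n) \<le> 1 / of_int n ^ 2 + 1 / of_int (n + int L) ^ 2"
      unfolding shift_term_def real_norm_def using assms by (rule inverse_powers_product_le)
  qed simp
  then show ?thesis
    by (rule summable_on_iff_abs_summable_on_real[THEN iffD2])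
qed

lemma shift_sum_has_sum: "2 \<le> a + b \<Longrightarrow> (shift_term L a b has_sum shift_sum L a b) (shift_support L)"
  unfolding shift_sum_def by (rule has_sum_infsum[OF shift_term_summable])

lemma partial_fraction_step:
  fixes x l :: real
  assumes "x \<noteq> 0" and "x + l \<noteq> 0" and "l \<noteq> 0"
  shows "1 / (x ^ Suc a * (x + l) ^ Suc b) = (1 / (x ^ Suc a * (x + l) ^ b) - 1 / (x ^ a * (x + l) ^ Suc b)) / l"
proof -
  have "x ^ a \<noteq> 0" and "(x + l) ^ b \<noteq> 0"
    using assms by auto
  with assms show ?thesis
    by (simp add: divide_simps)
qed

lemma shift_sum_recurrence:
  assumes "1 \<le> a + b" and "1 \<le> L"
  shows "shift_sum L (Suc a) (Suc b) = (shift_sum L (Suc a) b - shift_sum L a (Suc b)) / real L"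
proof -
  have "((\<lambda>n. (shift_term L (Suc a) b n - shift_term L a (Suc b) n) / real L) has_sum
      (shift_sum L (Suc a) b - shift_sum L a (Suc b)) / real L) (shift_support L)"
    using assms by (intro has_sum_divide_const has_sum_diff shift_sum_has_sum) auto
  also have "?this \<longleftrightarrow> (shift_term L (Suc a) (Suc b) has_sum
      (shift_sum L (Suc a) b - shift_sum L a (Suc b)) / real L) (shift_support L)"
  proof (rule has_sum_cong)
    fix n assume "n \<in> shift_support L"
    then have "real_of_int n \<noteq> 0" "real_of_int n + real L \<noteq> 0" "real L \<noteq> 0"
      using assms by (auto simp: shift_support_def)
    from partial_fraction_step[OF this]
    show "(shift_term L (Suc a) b n - shift_term L a (Suc b) n) / real L = shift_term L (Suc a) (Suc b) n"
      by (simp only: shift_term_def of_int_add of_int_of_nat_eq)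
  qed
  finally have "(shift_term L (Suc a) (Suc b) has_sum
      (shift_sum L (Suc a) b - shift_sum L a (Suc b)) / real L) (shift_support L)" .
  then show ?thesis
    by (rule has_sum_unique[OF shift_sum_has_sum, rotated]) simp
qed

lemma shift_sum_zero_right:
  assumes "2 \<le> a" and "1 \<le> L"
  shows "shift_sum L a 0 = (1 + (-1) ^ a) * rzeta a - (-1) ^ a / real L ^ a"
proof -
  have "((\<lambda>n::int. 1 / of_int n ^ a) has_sum (1 + (-1) ^ a) * rzeta a - (-1) ^ a / real L ^ a)
      ({n. n \<noteq> 0} - {- int L})"
    using assms by (intro has_sum_Diff rzeta_has_sum_int has_sum_finiteI) (auto simp: inverse_minus_power)
  moreover have "{n. n \<noteq> 0} - {- int L} = shift_support L"
    by (auto simp: shift_support_def)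
  moreover have "shift_term L a 0 = (\<lambda>n. 1 / of_int n ^ a)"
    by (simp add: fun_eq_iff shift_term_def)
  ultimately have "(shift_term L a 0 has_sum (1 + (-1) ^ a) * rzeta a - (-1) ^ a / real L ^ a)
      (shift_support L)"
    by simp
  then show ?thesis
    by (rule has_sum_unique[OF shift_sum_has_sum, rotated]) (use assms in simp)
qed

lemma shift_sum_zero_left:
  assumes "2 \<le> b" and "1 \<le> L"
  shows "shift_sum L 0 b = (1 + (-1) ^ b) * rzeta b - 1 / real L ^ b"
proof -
  have "((\<lambda>n::int. 1 / of_int n ^ b) has_sum (1 + (-1) ^ b) * rzeta b - 1 / real L ^ b)
      ({n. n \<noteq> 0} - {int L})"
    using assms by (intro has_sum_Diff rzeta_has_sum_int has_sum_finiteI) auto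
  then have "((\<lambda>n::int. 1 / of_int (n + int L) ^ b) has_sum (1 + (-1) ^ b) * rzeta b - 1 / real L ^ b)
      {n. n + int L \<in> {n. n \<noteq> 0} - {int L}}"
    by (rule has_sum_int_shift[THEN iffD1])
  moreover have "{n. n + int L \<in> {n. n \<noteq> 0} - {int L}} = shift_support L"
    by (auto simp: shift_support_def)
  moreover have "shift_term L 0 b = (\<lambda>n. 1 / of_int (n + int L) ^ b)"
    by (simp add: fun_eq_iff shift_term_def)
  ultimately have "(shift_term L 0 b has_sum (1 + (-1) ^ b) * rzeta b - 1 / real L ^ b)
      (shift_support L)"
    by simp
  then show ?thesis
    by (rule has_sum_unique[OF shift_sum_has_sum, rotated]) (use assms in simp)
qed

text \<open>
  For \<open>a = b = 1\<close> the partial fractions \<open>(1/n - 1/(n + L))/L\<close> are not summable separately, so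
  \<open>T(L)\<close> is computed by telescoping on the ranges \<open>n > 0\<close>, \<open>n < -L\<close> and \<open>-L < n < 0\<close>.
\<close>

lemma sums_telescope_shift:
  fixes g :: "nat \<Rightarrow> 'a::real_normed_vector"
  assumes "g \<longlonglongrightarrow> 0"
  shows "(\<lambda>n. g n - g (n + L)) sums (\<Sum>i<L. g i)"
proof (induction L)
  case (Suc L)
  have "(\<lambda>n. g (n + L)) \<longlonglongrightarrow> 0"
    using LIMSEQ_ignore_initial_segment[OF assms] .
  then have "(\<lambda>n. g (n + L) - g (Suc n + L)) sums g L"
    using telescope_sums' by fastforce
  from sums_add[OF Suc this] show ?case
    by simp
qed simp

lemma shift_term_one_one_has_sum_pos:
  assumes "1 \<le> L"
  shows "(shift_term L 1 1 has_sum harm L / real L) {n. 0 < n}"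
proof -
  have "(\<lambda>n. 1 / real (Suc n)) \<longlonglongrightarrow> 0"
    using LIMSEQ_inverse_real_of_nat by (simp add: inverse_eq_divide)
  from sums_telescope_shift[OF this, of L]
  have "(\<lambda>n. 1 / real (Suc n) - 1 / real (Suc (n + L))) sums (\<Sum>i<L. 1 / real (Suc i))"
    by simp
  then have "(\<lambda>n. (1 / real (Suc n) - 1 / real (Suc (n + L))) / real L) sums (harm L / real L)"
    unfolding harm_altdef inverse_eq_divide by (rule sums_divide)
  moreover have "(1 / real (Suc n) - 1 / real (Suc (n + L))) / real L =
      1 / (real (Suc n) * real (Suc n + L))" for n
    using assms by (simp add: divide_simps)
  ultimately have "((\<lambda>n. 1 / (real (Suc n) * real (Suc n + L))) has_sum harm L / real L) UNIV"
    by (intro sums_nonneg_imp_has_sum) auto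
  also have "?this \<longleftrightarrow> ?thesis"
    by (rule has_sum_reindex_bij_witness[where j = "\<lambda>k. int (Suc k)" and i = "\<lambda>n. nat (n - 1)"])
      (auto simp: shift_term_def)
  finally show ?thesis .
qed

lemma shift_term_one_one_has_sum_neg:
  assumes "1 \<le> L"
  shows "(shift_term L 1 1 has_sum harm L / real L) {n. n < - int L}"
proof -
  have "(shift_term L 1 1 has_sum harm L / real L) {n. 0 < n}"
    using shift_term_one_one_has_sum_pos[OF assms] .
  also have "?this \<longleftrightarrow> ?thesis"
  proof (rule has_sum_reindex_bij_witness[where j = "\<lambda>n. - n - int L" and i = "\<lambda>n. - n - int L"])
    fix n :: int
    have "real_of_int (- n - int L) * real_of_int (- n - int L + int L) =
        real_of_int n * real_of_int (n + int L)"
      by (simp add: algebra_simps)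
    then show "shift_term L 1 1 (- n - int L) = shift_term L 1 1 n"
      by (simp only: shift_term_def power_one_right)
  qed auto
  finally show ?thesis .
qed

lemma shift_term_one_one_sum_between:
  assumes "L = Suc M"
  shows "(\<Sum>n\<in>{n. - int L < n \<and> n < 0}. shift_term L 1 1 n) = - 2 * harm M / real L"
proof -
  have reflect: "{n. - int L < n \<and> n < 0} = (\<lambda>r. - int (Suc r)) ` {..<M}"
  proof (rule set_eqI, rule iffI)
    fix n assume "n \<in> {n. - int L < n \<and> n < 0}"
    then have "n = - int (Suc (nat (- n - 1)))" "nat (- n - 1) < M"
      using assms by auto
    then show "n \<in> (\<lambda>r. - int (Suc r)) ` {..<M}"
      by blast
  qed (use assms in auto)
  have pointwise: "shift_term L 1 1 (- int (Suc r)) = - (1 / real (Suc r) + 1 / real (M - r)) / real L"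
    if "r < M" for r
  proof -
    define x y where "x = real (Suc r)" and "y = real (M - r)"
    have "0 < x" and "0 < y" and L: "real L = x + y"
      using that assms by (auto simp: x_def y_def)
    have "shift_term L 1 1 (- int (Suc r)) = 1 / (- x * y)"
      using that assms by (simp add: shift_term_def x_def y_def of_nat_diff)
    also have "\<dots> = - (1 / x + 1 / y) / (x + y)"
      using \<open>0 < x\<close> \<open>0 < y\<close> by (simp add: divide_simps)
    finally show ?thesis
      unfolding L x_def y_def .
  qed
  have "(\<Sum>r<M. 1 / real (M - r)) = (\<Sum>r<M. 1 / real (Suc (M - Suc r)))"
    by (rule sum.cong) (auto simp: Suc_diff_Suc)
  also have "\<dots> = harm M"
    unfolding harm_altdef inverse_eq_divide by (rule sum.nat_diff_reindex)
  finally have two_harm: "(\<Sum>r<M. 1 / real (Suc r) + 1 / real (M - r)) = 2 * harm M"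
    by (simp add: sum.distrib harm_altdef inverse_eq_divide)
  have "(\<Sum>n\<in>{n. - int L < n \<and> n < 0}. shift_term L 1 1 n) =
      (\<Sum>r<M. shift_term L 1 1 (- int (Suc r)))"
    unfolding reflect by (rule sum.reindex_cong[OF _ refl refl]) (auto simp: inj_on_def)
  also have "\<dots> = (\<Sum>r<M. - (1 / real (Suc r) + 1 / real (M - r)) / real L)"
    by (rule sum.cong[OF refl pointwise]) simp
  also have "\<dots> = - (\<Sum>r<M. 1 / real (Suc r) + 1 / real (M - r)) / real L"
    by (simp only: sum_divide_distrib[symmetric] sum_negf)
  finally show ?thesis
    using two_harm by simp
qed

lemma shift_sum_one_one:
  assumes "1 \<le> L"
  shows "shift_sum L 1 1 = 2 / real L ^ 2"
proof -
  obtain M where M: "L = Suc M"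
    using assms by (cases L) auto
  have "(shift_term L 1 1 has_sum harm L / real L + - 2 * harm M / real L + harm L / real L)
      ({n. 0 < n} \<union> {n. - int L < n \<and> n < 0} \<union> {n. n < - int L})"
    using assms
    by (intro has_sum_Un_disjoint shift_term_one_one_has_sum_pos shift_term_one_one_has_sum_neg
        has_sum_finiteI shift_term_one_one_sum_between[OF M, symmetric]) auto
  moreover have "{n. 0 < n} \<union> {n. - int L < n \<and> n < 0} \<union> {n. n < - int L} = shift_support L"
    by (auto simp: shift_support_def)
  moreover have "harm L = harm M + 1 / real L"
    by (simp add: M harm_Suc inverse_eq_divide)
  then have "harm L / real L + - 2 * harm M / real L + harm L / real L = 2 / real L ^ 2"
    using assms by (simp add: field_simps power2_eq_square)
  ultimately show ?thesis
    using has_sum_unique[OF shift_sum_has_sum[of 1 1 L]] by simp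
qed

section \<open>Polynomials in the inverse shift\<close>

text \<open>
  Polynomials in \<open>1/L\<close> with coefficients in the zeta algebra and no terms of degree below \<open>d\<close>;
  only their values at \<open>L \<ge> 1\<close> matter.
\<close>

inductive_set zeta_inverse_poly :: "nat \<Rightarrow> (nat \<Rightarrow> real) set" for d :: nat where
  monom: "c \<in> zeta_algebra \<Longrightarrow> d \<le> k \<Longrightarrow> (\<lambda>L. c / real L ^ k) \<in> zeta_inverse_poly d"
| diff: "F \<in> zeta_inverse_poly d \<Longrightarrow> G \<in> zeta_inverse_poly d \<Longrightarrow> (\<lambda>L. F L - G L) \<in> zeta_inverse_poly d"
| cong: "F \<in> zeta_inverse_poly d \<Longrightarrow> (\<And>L. 1 \<le> L \<Longrightarrow> G L = F L) \<Longrightarrow> G \<in> zeta_inverse_poly d"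

lemma zeta_inverse_poly_mono:
  assumes "F \<in> zeta_inverse_poly d" and "d' \<le> d"
  shows "F \<in> zeta_inverse_poly d'"
  using assms(1)
proof (induction rule: zeta_inverse_poly.induct)
  case (monom c k)
  then show ?case
    using assms(2) by (intro zeta_inverse_poly.monom) auto
next
  case (diff F G)
  from diff.IH show ?case
    by (rule zeta_inverse_poly.diff)
next
  case (cong F G)
  from cong.IH cong.hyps(2) show ?case
    by (rule zeta_inverse_poly.cong)
qed

lemma zeta_inverse_poly_divide:
  "F \<in> zeta_inverse_poly d \<Longrightarrow> (\<lambda>L. F L / real L) \<in> zeta_inverse_poly (Suc d)"
proof (induction rule: zeta_inverse_poly.induct)
  case (monom c k)
  then have "(\<lambda>L. c / real L ^ Suc k) \<in> zeta_inverse_poly (Suc d)"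
    by (intro zeta_inverse_poly.monom) auto
  then show ?case
    by (simp add: mult.commute)
next
  case (diff F G)
  then show ?case
    using zeta_inverse_poly.diff[OF diff.IH] by (simp add: diff_divide_distrib)
next
  case (cong F G)
  from cong.IH show ?case
    by (rule zeta_inverse_poly.cong) (simp add: cong.hyps(2))
qed

lemma shift_sum_zero_right_in_zeta_inverse_poly:
  assumes "2 \<le> a"
  shows "(\<lambda>L. shift_sum L a 0) \<in> zeta_inverse_poly 0"
proof -
  have "(\<lambda>L. (1 + (-1) ^ a) * rzeta a / real L ^ 0 - (-1) ^ a / real L ^ a) \<in> zeta_inverse_poly 0"
    using assms by (intro zeta_inverse_poly.diff zeta_inverse_poly.monom zeta_algebra_one_plus_sign_rzeta
        zeta_algebra_minus_one_power) auto
  then show ?thesis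
    by (rule zeta_inverse_poly.cong) (use assms in \<open>simp add: shift_sum_zero_right\<close>)
qed

lemma shift_sum_zero_left_in_zeta_inverse_poly:
  assumes "2 \<le> b"
  shows "(\<lambda>L. shift_sum L 0 b) \<in> zeta_inverse_poly 0"
proof -
  have "(\<lambda>L. (1 + (-1) ^ b) * rzeta b / real L ^ 0 - 1 / real L ^ b) \<in> zeta_inverse_poly 0"
    using assms by (intro zeta_inverse_poly.diff zeta_inverse_poly.monom zeta_algebra_one_plus_sign_rzeta
        zeta_algebra.rat[of 1, simplified]) auto
  then show ?thesis
    by (rule zeta_inverse_poly.cong) (use assms in \<open>simp add: shift_sum_zero_left\<close>)
qed

lemma shift_sum_one_one_in_zeta_inverse_poly: "(\<lambda>L. shift_sum L 1 1) \<in> zeta_inverse_poly 1"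
proof -
  have "(\<lambda>L. 2 / real L ^ 2) \<in> zeta_inverse_poly 1"
    by (intro zeta_inverse_poly.monom) (use zeta_algebra.rat[of 2] in simp_all)
  then show ?thesis
    by (rule zeta_inverse_poly.cong) (use shift_sum_one_one in auto)
qed

lemma shift_sum_Suc_Suc_in_zeta_inverse_poly:
  assumes "(\<lambda>L. shift_sum L (Suc a) b) \<in> zeta_inverse_poly d"
    and "(\<lambda>L. shift_sum L a (Suc b)) \<in> zeta_inverse_poly d" and "1 \<le> a + b"
  shows "(\<lambda>L. shift_sum L (Suc a) (Suc b)) \<in> zeta_inverse_poly (Suc d)"
proof -
  from assms(1,2) have "(\<lambda>L. (shift_sum L (Suc a) b - shift_sum L a (Suc b)) / real L)
      \<in> zeta_inverse_poly (Suc d)"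
    by (intro zeta_inverse_poly_divide zeta_inverse_poly.diff)
  then show ?thesis
    by (rule zeta_inverse_poly.cong) (use assms(3) shift_sum_recurrence in auto)
qed

lemma shift_sum_in_zeta_inverse_poly:
  "2 \<le> a + b \<Longrightarrow> (\<lambda>L. shift_sum L a b) \<in> zeta_inverse_poly (min a b)"
proof (induction "a + b" arbitrary: a b rule: less_induct)
  case less
  consider "b = 0" | "a = 0" | "a = 1" "b = 1"
    | a' b' where "a = Suc a'" "b = Suc b'" "1 \<le> a' + b'"
  proof (cases "a = 0 \<or> b = 0")
    case False
    then obtain a' b' where "a = Suc a'" and "b = Suc b'"
      by (metis not0_implies_Suc)
    with that show ?thesis
      by (cases "a' + b' = 0") auto
  qed (use that in blast)
  then show ?case
  proof cases
    case 1
    with less.prems show ?thesis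
      using shift_sum_zero_right_in_zeta_inverse_poly[of a] by simp
  next
    case 2
    with less.prems show ?thesis
      using shift_sum_zero_left_in_zeta_inverse_poly[of b] by simp
  next
    case 3
    then show ?thesis
      using shift_sum_one_one_in_zeta_inverse_poly by simp
  next
    case 4
    have "(\<lambda>L. shift_sum L (Suc a') b') \<in> zeta_inverse_poly (min (Suc a') b')"
      and "(\<lambda>L. shift_sum L a' (Suc b')) \<in> zeta_inverse_poly (min a' (Suc b'))"
      using 4 by (intro less.hyps; simp)+
    then have "(\<lambda>L. shift_sum L (Suc a') b') \<in> zeta_inverse_poly (min a' b')"
      and "(\<lambda>L. shift_sum L a' (Suc b')) \<in> zeta_inverse_poly (min a' b')"
      by (simp_all add: zeta_inverse_poly_mono)
    with 4 show ?thesis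
      using shift_sum_Suc_Suc_in_zeta_inverse_poly[of a' b' "min a' b'"] by simp
  qed
qed

lemma zeta_inverse_poly_has_sum_even:
  "F \<in> zeta_inverse_poly 2 \<Longrightarrow> \<exists>v \<in> zeta_algebra. ((\<lambda>m. F (2 * m)) has_sum v) {1..}"
proof (induction rule: zeta_inverse_poly.induct)
  case (monom c k)
  have "((\<lambda>m::nat. c / 2 ^ k * (1 / real m ^ k)) has_sum c / 2 ^ k * rzeta k) {1..}"
    by (intro has_sum_cmult_right rzeta_has_sum) (use monom in simp)
  moreover have "c / 2 ^ k * rzeta k \<in> zeta_algebra"
    using monom by (intro zeta_algebra.mult zeta_algebra_divide_pow2 zeta_algebra_rzeta) auto
  ultimately show ?case
    by (auto simp: power_mult_distrib)
next
  case (diff F G)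
  then obtain v w where "v \<in> zeta_algebra" "((\<lambda>m. F (2 * m)) has_sum v) {1..}"
    and "w \<in> zeta_algebra" "((\<lambda>m. G (2 * m)) has_sum w) {1..}"
    by blast
  then show ?case
    by (intro bexI[of _ "v - w"] has_sum_diff zeta_algebra_diff)
next
  case (cong F G)
  then obtain v where "v \<in> zeta_algebra" and "((\<lambda>m. F (2 * m)) has_sum v) {1..}"
    by blast
  moreover have "((\<lambda>m. G (2 * m)) has_sum v) {1..} \<longleftrightarrow> ((\<lambda>m. F (2 * m)) has_sum v) {1..}"
    using cong.hyps(2) by (intro has_sum_cong) simp
  ultimately show ?case
    by blast
qed

section \<open>Summing over even shifts\<close>

lemma shift_terms_has_sum_positive:
  assumes "2 \<le> p" and "2 \<le> q"
  shows "((\<lambda>(m, n). shift_term (2 * m) p q n) has_sum zeta2sharp p q) {(m, n). 1 \<le> m \<and> 0 < n}"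
proof -
  have "((\<lambda>(m, n). 1 / (real n ^ p * real (2 * m + n) ^ q)) has_sum zeta2sharp p q) ({1..} \<times> {1..})"
    using zeta2sharp_has_sum[OF assms] .
  also have "?this \<longleftrightarrow> ?thesis"
    by (rule has_sum_reindex_bij_witness[where j = "\<lambda>(m, n). (m, int n)" and i = "\<lambda>(m, n). (m, nat n)"])
      (auto simp: shift_term_def add.commute)
  finally show ?thesis .
qed

lemma shift_terms_has_sum_between:
  assumes "2 \<le> p" and "2 \<le> q"
  shows "((\<lambda>(m, n). shift_term (2 * m) p q n) has_sum (-1) ^ p * parity_sum p q)
    {(m, n). 1 \<le> m \<and> - int (2 * m) < n \<and> n < 0}"
proof -
  have "((\<lambda>x. (-1) ^ p * pair_term p q x) has_sum (-1) ^ p * parity_sum p q) same_parity_pairs"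
    by (rule has_sum_cmult_right[OF parity_sum_has_sum[OF assms]])
  also have "?this \<longleftrightarrow> ?thesis"
  proof (rule has_sum_reindex_bij_witness[where j = "\<lambda>(r, k). ((r + k) div 2, - int r)"
        and i = "\<lambda>(m, n). (nat (- n), nat (n + int (2 * m)))"])
    fix x assume "x \<in> same_parity_pairs"
    then obtain r k where x: "x = (r, k)" "1 \<le> r" "1 \<le> k" "even (r + k)"
      by (auto simp: same_parity_pairs_def)
    then have "2 * ((r + k) div 2) = r + k"
      by simp
    then have m: "2 * int ((r + k) div 2) = int r + int k"
      and m_real: "2 * real ((r + k) div 2) = real r + real k"
      by (metis of_nat_add of_nat_mult of_nat_numeral)+
    with x(1-3) show "(\<lambda>(m, n). (nat (- n), nat (n + int (2 * m)))) ((\<lambda>(r, k). ((r + k) div 2, - int r)) x) = x"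
      and "(\<lambda>(r, k). ((r + k) div 2, - int r)) x \<in> {(m, n). 1 \<le> m \<and> - int (2 * m) < n \<and> n < 0}"
      by auto
    from m m_real show "(\<lambda>(m, n). shift_term (2 * m) p q n) ((\<lambda>(r, k). ((r + k) div 2, - int r)) x) =
        (-1) ^ p * pair_term p q x"
      by (simp add: x(1) shift_term_def pair_term_def inverse_minus_power_mult)
  next
    fix y assume "y \<in> {(m, n). 1 \<le> m \<and> - int (2 * m) < n \<and> n < (0::int)}"
    then obtain m n where y: "y = (m, n)" "1 \<le> m" "- int (2 * m) < n" "n < 0"
      by auto
    then have sum: "nat (- n) + nat (n + int (2 * m)) = 2 * m"
      by linarith
    with y show "(\<lambda>(r, k). ((r + k) div 2, - int r)) ((\<lambda>(m, n). (nat (- n), nat (n + int (2 * m)))) y) = y"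
      by auto
    from sum have "even (nat (- n) + nat (n + int (2 * m)))"
      by simp
    with y show "(\<lambda>(m, n). (nat (- n), nat (n + int (2 * m)))) y \<in> same_parity_pairs"
      unfolding same_parity_pairs_def by auto
  qed simp
  finally show ?thesis .
qed

lemma shift_terms_has_sum_below:
  assumes "2 \<le> p" and "2 \<le> q" and "odd (p + q)"
  shows "((\<lambda>(m, n). shift_term (2 * m) p q n) has_sum - zeta2sharp q p) {(m, n). 1 \<le> m \<and> n < - int (2 * m)}"
proof -
  have "((\<lambda>x. - (\<lambda>(m, n). 1 / (real n ^ q * real (2 * m + n) ^ p)) x) has_sum - zeta2sharp q p)
      ({1..} \<times> {1..})"
    using zeta2sharp_has_sum[OF assms(2,1)] by (simp add: has_sum_uminus)
  also have "?this \<longleftrightarrow> ?thesis"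
  proof (rule has_sum_reindex_bij_witness[where j = "\<lambda>(m, k). (m, - int (k + 2 * m))"
        and i = "\<lambda>(m, n). (m, nat (- n - int (2 * m)))"])
    fix x :: "nat \<times> nat"
    obtain m k where x: "x = (m, k)"
      by (cases x)
    have "shift_term (2 * m) p q (- int (k + 2 * m)) = 1 / ((- real (2 * m + k)) ^ p * (- real k) ^ q)"
      by (simp add: shift_term_def algebra_simps)
    also have "\<dots> = - (1 / (real k ^ q * real (2 * m + k) ^ p))"
      by (subst inverse_minus_powers_odd[OF assms(3)]) (simp add: mult.commute)
    finally show "(\<lambda>(m, n). shift_term (2 * m) p q n) ((\<lambda>(m, k). (m, - int (k + 2 * m))) x) =
        - (\<lambda>(m, n). 1 / (real n ^ q * real (2 * m + n) ^ p)) x"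
      by (simp add: x)
  qed auto
  finally show ?thesis .
qed

lemma even_shift_sums_has_sum:
  assumes "2 \<le> p" and "2 \<le> q" and "odd (p + q)"
  shows "((\<lambda>m. shift_sum (2 * m) p q) has_sum zeta2sharp p q + (-1) ^ p * parity_sum p q - zeta2sharp q p) {1..}"
proof (rule has_sum_Sigma')
  have "((\<lambda>(m, n). shift_term (2 * m) p q n) has_sum zeta2sharp p q + (-1) ^ p * parity_sum p q + - zeta2sharp q p)
      ({(m, n). 1 \<le> m \<and> 0 < n} \<union> {(m, n). 1 \<le> m \<and> - int (2 * m) < n \<and> n < 0} \<union>
       {(m, n). 1 \<le> m \<and> n < - int (2 * m)})"
    using assms by (intro has_sum_Un_disjoint shift_terms_has_sum_positive shift_terms_has_sum_between
        shift_terms_has_sum_below) auto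
  moreover have "{(m, n). 1 \<le> m \<and> 0 < n} \<union> {(m, n). 1 \<le> m \<and> - int (2 * m) < n \<and> n < 0} \<union>
      {(m, n). 1 \<le> m \<and> n < - int (2 * m)} = Sigma {1..} (\<lambda>m. shift_support (2 * m))"
    by (auto simp: shift_support_def)
  ultimately show "((\<lambda>(m, n). shift_term (2 * m) p q n) has_sum
      zeta2sharp p q + (-1) ^ p * parity_sum p q - zeta2sharp q p) (Sigma {1..} (\<lambda>m. shift_support (2 * m)))"
    by simp
next
  show "((\<lambda>n. (\<lambda>(m, n). shift_term (2 * m) p q n) (m, n)) has_sum shift_sum (2 * m) p q) (shift_support (2 * m))" for m
    using assms shift_sum_has_sum[of p q "2 * m"] by simp
qed

theorem corollary6p5:
  fixes p q :: nat
  assumes "p \<ge> 2" and "q \<ge> 2" and "odd (p + q)"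
  shows "zeta2sharp p q \<in> zeta_algebra"
proof -
  have "(\<lambda>L. shift_sum L p q) \<in> zeta_inverse_poly 2"
    using assms by (intro zeta_inverse_poly_mono[OF shift_sum_in_zeta_inverse_poly]) auto
  then obtain v where "v \<in> zeta_algebra" and "((\<lambda>m. shift_sum (2 * m) p q) has_sum v) {1..}"
    using zeta_inverse_poly_has_sum_even by blast
  then have v: "v = zeta2sharp p q + (-1) ^ p * parity_sum p q - zeta2sharp q p"
    using has_sum_unique even_shift_sums_has_sum[OF assms] by blast
  have "zeta2sharp p q = (v + parity_sum p q - rzeta (p + q) - (-1) ^ p * parity_sum p q) / 2 ^ 1"
    using v parity_sum_eq_zeta2sharp[OF assms(1,2)] by simp
  also have "\<dots> \<in> zeta_algebra"
    using assms \<open>v \<in> zeta_algebra\<close>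
    by (intro zeta_algebra_divide_pow2 zeta_algebra_diff zeta_algebra.add zeta_algebra.mult
        zeta_algebra_rzeta zeta_algebra_minus_one_power parity_sum_in_zeta_algebra) auto
  finally show ?thesis .
qed

end
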